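(* Let $H$ be a graph and $q\in\mathbb N$, and suppose $H\otimes J_q$ contains a matching-linked set $X$. Then $\gamma(H)\ge \frac13\cdot |X|/q$.
   Context: Blowup: for a graph $H$ and $t\in\mathbb N$, $H\otimes J_t$ has vertices $v^{(i)}$ for $v\in V(H)$, $i\in[t]$, and edges $u^{(i)}v^{(j)}$ for all $uv\in E(H)$, $i,j\in[t]$, together with $u^{(i)}u^{(j)}$ for all $u\in V(H)$, $i\neq j\in[t]$. A matching on a vertex set $X$ is a set of pairwise disjoint unordered pairs of distinct vertices of $X$ (not necessarily edges of the graph). For a graph $H'$ and a multigraph $M$ with $V(M)\subseteq V(H')$, an $M$-linkage in $H'$ is a family of paths $(P_e)_{e\in E(M)}$ in $H'$ such that $P_e$ has the endpoints of $e$ as its endpoints; it is uncongested if every vertex lies on at most one of the paths. $X\subseteq V(H')$ is matching-linked in $H'$ if $H'$ contains an uncongested $M$-linkage for every matching $M$ on $X$. Linkage capacity: $\gamma(H)$ is the supremum of all $c>0$ such that for all sufficiently large $t\in\mathbb N$ the blowup $H\otimes J_t$ contains a matching-linked set of size $\lfloor ct\rfloor$. *)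

theory Defs
  imports Complex_Main
begin

definition graph :: "'a set \<Rightarrow> 'a set set \<Rightarrow> bool" where
  "graph V E \<longleftrightarrow> finite V \<and> (\<forall>e\<in>E. \<exists>u v. e = {u, v} \<and> u \<noteq> v \<and> u \<in> V \<and> v \<in> V)"

definition blowup_V :: "'a set \<Rightarrow> nat \<Rightarrow> ('a \<times> nat) set" where
  "blowup_V V t = V \<times> {0..<t}"

definition blowup_E :: "'a set \<Rightarrow> 'a set set \<Rightarrow> nat \<Rightarrow> ('a \<times> nat) set set" where
  "blowup_E V E t =
     {{(u, i), (v, j)} | u v i j. {u, v} \<in> E \<and> i < t \<and> j < t}
   \<union> {{(u, i), (u, j)} | u i j. u \<in> V \<and> i < t \<and> j < t \<and> i \<noteq> j}"

definition is_path :: "'a set \<Rightarrow> 'a set set \<Rightarrow> 'a list \<Rightarrow> 'a \<Rightarrow> 'a \<Rightarrow> bool" where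
  "is_path V E p a b \<longleftrightarrow> p \<noteq> [] \<and> distinct p \<and> hd p = a \<and> last p = b \<and> set p \<subseteq> V \<and>
     (\<forall>k. Suc k < length p \<longrightarrow> {p ! k, p ! Suc k} \<in> E)"

definition matching_on :: "'a set \<Rightarrow> 'a set set \<Rightarrow> bool" where
  "matching_on X M \<longleftrightarrow>
     (\<forall>e\<in>M. \<exists>a b. e = {a, b} \<and> a \<noteq> b \<and> a \<in> X \<and> b \<in> X) \<and>
     (\<forall>e\<in>M. \<forall>f\<in>M. e \<noteq> f \<longrightarrow> e \<inter> f = {})"

definition has_uncongested_linkage :: "'a set \<Rightarrow> 'a set set \<Rightarrow> 'a set set \<Rightarrow> bool" where
  "has_uncongested_linkage V E M \<longleftrightarrow>
     (\<exists>P :: 'a set \<Rightarrow> 'a list.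
        (\<forall>e\<in>M. \<exists>a b. e = {a, b} \<and> is_path V E (P e) a b) \<and>
        (\<forall>e\<in>M. \<forall>f\<in>M. e \<noteq> f \<longrightarrow> set (P e) \<inter> set (P f) = {}))"

definition matching_linked :: "'a set \<Rightarrow> 'a set set \<Rightarrow> 'a set \<Rightarrow> bool" where
  "matching_linked V E X \<longleftrightarrow> X \<subseteq> V \<and>
     (\<forall>M. matching_on X M \<longrightarrow> has_uncongested_linkage V E M)"

text \<open>Linkage capacity; the supremum of an empty set of positive reals is taken to be 0.\<close>
definition linkage_capacity :: "'a set \<Rightarrow> 'a set set \<Rightarrow> real" where
  "linkage_capacity V E = Sup (insert 0 {c::real. c > 0 \<and>
     (\<exists>T::nat. \<forall>t\<ge>T. \<exists>X. matching_linked (blowup_V V t) (blowup_E V E t) X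
                          \<and> card X = nat \<lfloor>c * real t\<rfloor>)})"

end

theory Submission
  imports Defs
begin

text \<open>For t \<ge> (3s + 1)q the blowup H \<otimes> J_t contains 3s + 1 disjoint layers, each a copy of
  H \<otimes> J_q, and the copies of a vertex of H \<otimes> J_q in different layers form a clique. Put s copies
  of X into the first s layers. A matching on these copies projects to pairs of X; two pairs conflict
  when their projections meet, and each pair conflicts with at most 2s others, so 2s + 1 colours
  split the projected pairs into matchings on X. Each colour class is linked inside a layer of its
  own by the linkage of X, which the pairs reach along the cliques; pairs projecting to a single
  vertex of X are adjacent anyway. So s|X| vertices are matching-linked in H \<otimes> J_t, and
  s \<approx> t/(3q).\<close>

section \<open>Paths\<close>

lemma is_path_map:
  assumes "is_path V E p a b" "inj_on f V" "f ` V \<subseteq> V'" "\<And>e. e \<in> E \<Longrightarrow> f ` e \<in> E'"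
  shows "is_path V' E' (map f p) (f a) (f b)"
proof -
  have "set p \<subseteq> V" "distinct p" using assms(1) by (auto simp: is_path_def)
  then have "distinct (map f p)" using assms(2) by (auto simp: distinct_map intro: inj_on_subset)
  moreover have "{map f p ! k, map f p ! Suc k} \<in> E'" if "Suc k < length p" for k
    using assms(1) assms(4)[of "{p ! k, p ! Suc k}"] that by (simp add: is_path_def)
  ultimately show ?thesis
    using assms(1,3) \<open>set p \<subseteq> V\<close> by (auto simp: is_path_def hd_map last_map)
qed

lemma is_path_pair: "a \<noteq> b \<Longrightarrow> a \<in> V \<Longrightarrow> b \<in> V \<Longrightarrow> {a, b} \<in> E \<Longrightarrow> is_path V E [a, b] a b"
  unfolding is_path_def by (auto simp: less_Suc_eq)

lemma is_path_Cons:
  assumes "is_path V E p a b" "c \<in> V" "c \<notin> set p" "{c, a} \<in> E"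
  shows "is_path V E (c # p) c b"
proof -
  have "p \<noteq> []" "p ! 0 = a" using assms(1) by (auto simp: is_path_def hd_conv_nth)
  then have "{(c # p) ! k, (c # p) ! Suc k} \<in> E" if "Suc k < length (c # p)" for k
    using assms(1,4) that by (cases k) (auto simp: is_path_def)
  then show ?thesis using assms \<open>p \<noteq> []\<close> unfolding is_path_def by auto
qed

lemma is_path_snoc:
  assumes "is_path V E p a b" "c \<in> V" "c \<notin> set p" "{b, c} \<in> E"
  shows "is_path V E (p @ [c]) a c"
proof -
  have "p \<noteq> []" "p ! (length p - 1) = b" using assms(1) by (auto simp: is_path_def last_conv_nth)
  then have "{(p @ [c]) ! k, (p @ [c]) ! Suc k} \<in> E" if "Suc k < length (p @ [c])" for k
  proof (cases "Suc k < length p")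
    case False
    then have "k = length p - 1" using that by simp
    then show ?thesis using assms(4) \<open>p ! (length p - 1) = b\<close> \<open>p \<noteq> []\<close> by (simp add: nth_append)
  qed (use assms(1) in \<open>auto simp: is_path_def nth_append\<close>)
  then show ?thesis using assms \<open>p \<noteq> []\<close> unfolding is_path_def by auto
qed

section \<open>Colourings and linkages\<close>

lemma card_disjoint_family_meeting_le:
  assumes "finite S" "pairwise disjnt F" "\<And>f. f \<in> F \<Longrightarrow> f \<inter> S \<noteq> {}"
  shows "card F \<le> card S"
proof -
  define g where "g f = (SOME w. w \<in> f \<inter> S)" for f
  have g: "g f \<in> f \<inter> S" if "f \<in> F" for f
    unfolding g_def by (rule someI_ex) (use assms(3)[OF that] in blast)
  have "inj_on g F"
  proof (rule inj_onI)
    fix f f' assume "f \<in> F" "f' \<in> F" "g f = g f'"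
    then have "\<not> disjnt f f'" using g by (metis IntE disjnt_iff)
    then show "f = f'" using assms(2) \<open>f \<in> F\<close> \<open>f' \<in> F\<close> by (meson pairwiseD)
  qed
  moreover have "g ` F \<subseteq> S" using g by blast
  ultimately show ?thesis using assms(1) by (rule card_inj_on_le)
qed

lemma greedy_colouring:
  fixes d :: nat
  assumes "finite N" "symp R" "\<And>e. e \<in> N \<Longrightarrow> card {f \<in> N. f \<noteq> e \<and> R e f} < d"
  obtains col where "\<And>e. e \<in> N \<Longrightarrow> col e < d"
    and "\<And>e f. e \<in> N \<Longrightarrow> f \<in> N \<Longrightarrow> e \<noteq> f \<Longrightarrow> R e f \<Longrightarrow> col e \<noteq> col f"
proof -
  have "\<exists>col. (\<forall>e\<in>F. col e < d) \<and> (\<forall>e\<in>F. \<forall>f\<in>F. e \<noteq> f \<longrightarrow> R e f \<longrightarrow> col e \<noteq> col f)"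
    if "F \<subseteq> N" for F
    using finite_subset[OF that assms(1)] that
  proof (induction F rule: finite_induct)
    case (insert e F)
    then obtain col where col: "\<forall>e\<in>F. col e < d" "\<forall>e\<in>F. \<forall>f\<in>F. e \<noteq> f \<longrightarrow> R e f \<longrightarrow> col e \<noteq> col f"
      by auto
    define used where "used = col ` {f \<in> F. R e f}"
    have "card used \<le> card {f \<in> F. R e f}"
      unfolding used_def using insert.hyps(1) by (intro card_image_le) simp
    also have "\<dots> \<le> card {f \<in> N. f \<noteq> e \<and> R e f}"
      using insert assms(1) by (intro card_mono) auto
    also have "\<dots> < card {..<d}" using assms(3) insert.prems by simp
    finally have "\<not> {..<d} \<subseteq> used"
      using card_mono[of used "{..<d}"] insert.hyps(1) unfolding used_def by auto
    then obtain c where c: "c < d" "c \<notin> used" by blast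
    have "col f \<noteq> c" if "f \<in> F" "R f e" for f
      using c that sympD[OF assms(2), of f e] unfolding used_def by blast
    moreover have "col f \<noteq> c" if "f \<in> F" "R e f" for f
      using c that unfolding used_def by blast
    ultimately show ?case
      using col c insert.hyps(2) by (intro exI[of _ "col(e := c)"]) auto
  qed simp
  from this[OF order.refl] show ?thesis using that by blast
qed

lemma matching_linked_subset:
  assumes "matching_linked V E Y" "Z \<subseteq> Y"
  shows "matching_linked V E Z"
proof -
  have "matching_on Y M" if "matching_on Z M" for M
    using that assms(2) unfolding matching_on_def by (meson subsetD)
  moreover have "Z \<subseteq> V" using assms unfolding matching_linked_def by (meson order.trans)
  ultimately show ?thesis using assms(1) unfolding matching_linked_def by simp
qed

lemma has_uncongested_linkageI:
  assumes "\<And>e. e \<in> M \<Longrightarrow> \<exists>p a b. e = {a, b} \<and> is_path V E p a b \<and> set p \<subseteq> S e"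
    and "\<And>e f. e \<in> M \<Longrightarrow> f \<in> M \<Longrightarrow> e \<noteq> f \<Longrightarrow> S e \<inter> S f = {}"
  shows "has_uncongested_linkage V E M"
proof -
  define P where "P e = (SOME p. \<exists>a b. e = {a, b} \<and> is_path V E p a b \<and> set p \<subseteq> S e)" for e
  have P: "\<exists>a b. e = {a, b} \<and> is_path V E (P e) a b \<and> set (P e) \<subseteq> S e" if "e \<in> M" for e
    unfolding P_def using assms(1)[OF that] by (rule someI_ex)
  show ?thesis unfolding has_uncongested_linkage_def
  proof (intro exI[of _ P] conjI ballI impI)
    fix e f assume "e \<in> M" "f \<in> M" "e \<noteq> f"
    then show "set (P e) \<inter> set (P f) = {}" using P[of e] P[of f] assms(2)[of e f] by blast
  qed (use P in blast)
qed

section \<open>Layers of a blowup\<close>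

text \<open>Vertex (v, i + q * l) of H \<otimes> J_t is the copy in layer l of the vertex (v, i) of
  H \<otimes> J_q; for i < q, base and layer recover (v, i) and l.\<close>

definition to_layer :: "nat \<Rightarrow> nat \<Rightarrow> 'a \<times> nat \<Rightarrow> 'a \<times> nat" where
  "to_layer q l w = (fst w, snd w + q * l)"

definition base :: "nat \<Rightarrow> 'a \<times> nat \<Rightarrow> 'a \<times> nat" where
  "base q w = (fst w, snd w mod q)"

definition layer :: "nat \<Rightarrow> 'a \<times> nat \<Rightarrow> nat" where
  "layer q w = snd w div q"

lemma inj_to_layer: "inj (to_layer q l)"
  by (auto simp: inj_def to_layer_def prod_eq_iff)

lemma base_to_layer: "x \<in> blowup_V V q \<Longrightarrow> base q (to_layer q l x) = x"
  by (auto simp: base_def to_layer_def blowup_V_def)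

lemma layer_to_layer: "x \<in> blowup_V V q \<Longrightarrow> layer q (to_layer q l x) = l"
  by (auto simp: layer_def to_layer_def blowup_V_def)

lemma to_layer_in_blowup_V:
  "x \<in> blowup_V V q \<Longrightarrow> q * Suc l \<le> t \<Longrightarrow> to_layer q l x \<in> blowup_V V t"
  by (auto simp: blowup_V_def to_layer_def)

lemma blowup_E_clique:
  "v \<in> V \<Longrightarrow> i < t \<Longrightarrow> j < t \<Longrightarrow> i \<noteq> j \<Longrightarrow> {(v, i), (v, j)} \<in> blowup_E V E t"
  unfolding blowup_E_def by blast

lemma to_layer_in_blowup_E:
  assumes "e \<in> blowup_E V E q" "q * Suc l \<le> t"
  shows "to_layer q l ` e \<in> blowup_E V E t"
proof -
  from assms(1) consider (edge) u v i j where "e = {(u, i), (v, j)}" "{u, v} \<in> E" "i < q" "j < q"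
    | (clique) u i j where "e = {(u, i), (u, j)}" "u \<in> V" "i < q" "j < q" "i \<noteq> j"
    unfolding blowup_E_def by blast
  then show ?thesis
  proof cases
    case edge
    then have "i + q * l < t" "j + q * l < t" using assms(2) by auto
    moreover have "to_layer q l ` e = {(u, i + q * l), (v, j + q * l)}"
      using edge by (simp add: to_layer_def)
    ultimately show ?thesis using edge unfolding blowup_E_def by blast
  next
    case clique
    then have "i + q * l < t" "j + q * l < t" using assms(2) by auto
    moreover have "to_layer q l ` e = {(u, i + q * l), (u, j + q * l)}"
      using clique by (simp add: to_layer_def)
    ultimately show ?thesis using clique by (simp add: blowup_E_clique)
  qed
qed

lemma blowup_E_between_layers:
  assumes "x \<in> blowup_V V q" "q * Suc l \<le> t" "q * Suc l' \<le> t" "l \<noteq> l'"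
  shows "{to_layer q l x, to_layer q l' x} \<in> blowup_E V E t"
proof -
  have "snd x < q" "fst x \<in> V" using assms(1) by (auto simp: blowup_V_def)
  with assms(2-4) show ?thesis
    unfolding to_layer_def by (intro blowup_E_clique) auto
qed

lemma is_path_via_layer:
  assumes p: "is_path (blowup_V V q) (blowup_E V E q) p u v" and "u \<noteq> v"
    and t: "q * Suc la \<le> t" "q * Suc l \<le> t" "q * Suc lb \<le> t" and "la \<noteq> l" "lb \<noteq> l"
  shows "is_path (blowup_V V t) (blowup_E V E t)
           (to_layer q la u # map (to_layer q l) p @ [to_layer q lb v]) (to_layer q la u) (to_layer q lb v)"
proof -
  have uv: "u \<in> blowup_V V q" "v \<in> blowup_V V q" "set p \<subseteq> blowup_V V q"
    using p by (auto simp: is_path_def)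
  have "is_path (blowup_V V t) (blowup_E V E t) (map (to_layer q l) p) (to_layer q l u) (to_layer q l v)"
    using p inj_to_layer to_layer_in_blowup_V t(2) to_layer_in_blowup_E
    by (intro is_path_map) (auto intro: inj_on_subset)
  moreover have layers: "layer q w = l" if "w \<in> set (map (to_layer q l) p)" for w
    using that uv(3) by (auto intro: layer_to_layer)
  moreover have "to_layer q lb v \<notin> set (map (to_layer q l) p)"
    using layers layer_to_layer[OF uv(2)] \<open>lb \<noteq> l\<close> by metis
  moreover have "{to_layer q l v, to_layer q lb v} \<in> blowup_E V E t"
    using uv(2) t(2,3) \<open>lb \<noteq> l\<close> by (simp add: blowup_E_between_layers)
  ultimately have path: "is_path (blowup_V V t) (blowup_E V E t) (map (to_layer q l) p @ [to_layer q lb v])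
                     (to_layer q l u) (to_layer q lb v)"
    using uv(2) t(3) by (intro is_path_snoc to_layer_in_blowup_V)
  have "to_layer q la u \<notin> set (map (to_layer q l) p)"
    using layers layer_to_layer[OF uv(1)] \<open>la \<noteq> l\<close> by metis
  moreover have "to_layer q la u \<noteq> to_layer q lb v"
    using \<open>u \<noteq> v\<close> base_to_layer uv by metis
  moreover have "{to_layer q la u, to_layer q l u} \<in> blowup_E V E t"
    using uv(1) t(1,2) \<open>la \<noteq> l\<close> by (rule blowup_E_between_layers)
  ultimately show ?thesis
    using path uv(1) t(1) by (intro is_path_Cons to_layer_in_blowup_V) auto
qed

definition layered_copies :: "nat \<Rightarrow> nat \<Rightarrow> ('a \<times> nat) set \<Rightarrow> ('a \<times> nat) set" where
  "layered_copies q s X = (\<lambda>(x, l). to_layer q l x) ` (X \<times> {..<s})"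

lemma layered_copiesD:
  assumes "w \<in> layered_copies q s X" "X \<subseteq> blowup_V V q"
  shows "base q w \<in> X" "layer q w < s" "to_layer q (layer q w) (base q w) = w"
  using assms by (auto simp: layered_copies_def base_to_layer layer_to_layer)

lemma layered_copies_subset:
  assumes "X \<subseteq> blowup_V V q" "q * s \<le> t"
  shows "layered_copies q s X \<subseteq> blowup_V V t"
proof
  fix w assume "w \<in> layered_copies q s X"
  then obtain x l where "x \<in> X" "l < s" "w = to_layer q l x" by (auto simp: layered_copies_def)
  moreover have "q * Suc l \<le> t"
    using \<open>l < s\<close> assms(2) by (meson Suc_leI le_trans mult_le_mono2)
  ultimately show "w \<in> blowup_V V t" using assms(1) to_layer_in_blowup_V by blast
qed

lemma card_layered_copies:
  assumes "X \<subseteq> blowup_V V q"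
  shows "card (layered_copies q s X) = card X * s"
proof -
  have "inj_on (\<lambda>(x, l). to_layer q l x) (X \<times> {..<s})"
    by (rule inj_on_inverseI[where g = "\<lambda>w. (base q w, layer q w)"])
       (use assms in \<open>auto simp: base_to_layer layer_to_layer\<close>)
  then show ?thesis by (simp add: layered_copies_def card_image card_cartesian_product)
qed

lemma card_layered_copies_over:
  assumes "X \<subseteq> blowup_V V q" "finite B"
  shows "card {w \<in> layered_copies q s X. base q w \<in> B} \<le> card B * s"
proof -
  have "{w \<in> layered_copies q s X. base q w \<in> B} \<subseteq> (\<lambda>(x, l). to_layer q l x) ` (B \<times> {..<s})"
  proof
    fix w assume "w \<in> {w \<in> layered_copies q s X. base q w \<in> B}"
    then have "base q w \<in> B" "layer q w < s" "to_layer q (layer q w) (base q w) = w"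
      using layered_copiesD[OF _ assms(1), of w s] by auto
    then show "w \<in> (\<lambda>(x, l). to_layer q l x) ` (B \<times> {..<s})"
      by (intro image_eqI[of _ _ "(base q w, layer q w)"]) auto
  qed
  then have "card {w \<in> layered_copies q s X. base q w \<in> B} \<le> card (B \<times> {..<s})"
    using assms(2) by (meson card_image_le card_mono finite_SigmaI finite_imageI finite_lessThan le_trans)
  then show ?thesis by (simp add: card_cartesian_product)
qed

section \<open>Routing a matching on layered copies\<close>

lemma layered_matching_colouring:
  assumes X: "X \<subseteq> blowup_V V q" "finite X" and M: "matching_on (layered_copies q s X) M"
  obtains col where "\<And>e. e \<in> M \<Longrightarrow> col e < 2 * s + 1"
    and "\<And>e f. e \<in> M \<Longrightarrow> f \<in> M \<Longrightarrow> e \<noteq> f \<Longrightarrow> col e = col f \<Longrightarrow> base q ` e \<inter> base q ` f = {}"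
proof -
  let ?Y = "layered_copies q s X"
  define R where "R e f \<longleftrightarrow> base q ` e \<inter> base q ` f \<noteq> {}" for e f :: "('a \<times> nat) set"
  have pairs: "\<And>e. e \<in> M \<Longrightarrow> \<exists>a b. e = {a, b} \<and> a \<noteq> b \<and> a \<in> ?Y \<and> b \<in> ?Y"
    and disj: "\<And>e f. e \<in> M \<Longrightarrow> f \<in> M \<Longrightarrow> e \<noteq> f \<Longrightarrow> e \<inter> f = {}"
    using M unfolding matching_on_def by simp_all
  have "finite ?Y" using X(2) by (simp add: layered_copies_def)
  moreover have "M \<subseteq> Pow ?Y" using pairs by fastforce
  ultimately have "finite M" by (meson finite_Pow_iff finite_subset)
  have "symp R" unfolding R_def by (auto intro: sympI)
  have conflicts: "\<And>e. e \<in> M \<Longrightarrow> card {f \<in> M. f \<noteq> e \<and> R e f} < 2 * s + 1"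
  proof -
    fix e assume e: "e \<in> M"
    obtain a b where ab: "e = {a, b}" using pairs[OF e] by blast
    let ?S = "{w \<in> ?Y. base q w \<in> base q ` e}"
    have "card {f \<in> M. f \<noteq> e \<and> R e f} \<le> card ?S"
    proof (rule card_disjoint_family_meeting_le)
      show "pairwise disjnt {f \<in> M. f \<noteq> e \<and> R e f}"
        using disj by (auto simp: pairwise_def disjnt_def)
      show "f \<inter> ?S \<noteq> {}" if "f \<in> {f \<in> M. f \<noteq> e \<and> R e f}" for f
      proof -
        have "f \<in> M" "base q ` e \<inter> base q ` f \<noteq> {}" using that unfolding R_def by simp_all
        then obtain z where "z \<in> base q ` e" "z \<in> base q ` f" by blast
        then obtain w where "w \<in> f" "base q w \<in> base q ` e" by (metis imageE)
        moreover have "f \<subseteq> ?Y" using pairs[OF \<open>f \<in> M\<close>] by auto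
        ultimately show ?thesis by auto
      qed
    qed (simp add: \<open>finite ?Y\<close>)
    also have "\<dots> \<le> card (base q ` e) * s" using ab by (intro card_layered_copies_over[OF X(1)]) simp
    also have "\<dots> \<le> 2 * s" using ab by (simp add: card_insert_if)
    finally show "card {f \<in> M. f \<noteq> e \<and> R e f} < 2 * s + 1" by simp
  qed
  obtain col where "\<And>e. e \<in> M \<Longrightarrow> col e < 2 * s + 1"
    and proper: "\<And>e f. e \<in> M \<Longrightarrow> f \<in> M \<Longrightarrow> e \<noteq> f \<Longrightarrow> R e f \<Longrightarrow> col e \<noteq> col f"
    using greedy_colouring[OF \<open>finite M\<close> \<open>symp R\<close> conflicts] by blast
  moreover have "base q ` e \<inter> base q ` f = {}" if "e \<in> M" "f \<in> M" "e \<noteq> f" "col e = col f" for e f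
    using proper[OF that(1-3)] that(4) unfolding R_def by blast
  ultimately show ?thesis using that by blast
qed

lemma route_pair_via_layer:
  assumes X: "X \<subseteq> blowup_V V q"
    and ab: "a \<noteq> b" "a \<in> layered_copies q s X" "b \<in> layered_copies q s X"
    and t: "q * (3 * s + 1) \<le> t" and c: "c < 2 * s + 1"
    and P: "card (base q ` {a, b}) = 2 \<Longrightarrow>
              \<exists>u v. base q ` {a, b} = {u, v} \<and> is_path (blowup_V V q) (blowup_E V E q) p u v"
  shows "\<exists>r a' b'. {a, b} = {a', b'} \<and> is_path (blowup_V V t) (blowup_E V E t) r a' b' \<and>
           set r \<subseteq> {a, b} \<union> (if card (base q ` {a, b}) = 2 then to_layer q (s + c) ` set p else {})"
proof (cases "card (base q ` {a, b}) = 2")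
  case False
  then have "base q a = base q b" by (auto simp: card_insert_if split: if_splits)
  then obtain x i j where "a = (x, i)" "b = (x, j)" by (auto simp: base_def prod_eq_iff)
  moreover have "a \<in> blowup_V V t" "b \<in> blowup_V V t"
    using ab(2,3) layered_copies_subset[OF X, of s t] t by auto
  ultimately have "{a, b} \<in> blowup_E V E t"
    using ab(1) by (auto simp: blowup_V_def intro: blowup_E_clique)
  then have "is_path (blowup_V V t) (blowup_E V E t) [a, b] a b"
    using ab(1) \<open>a \<in> blowup_V V t\<close> \<open>b \<in> blowup_V V t\<close> by (intro is_path_pair)
  then show ?thesis by (intro exI[of _ "[a, b]"] exI[of _ a] exI[of _ b]) simp
next
  case True
  then obtain u v where uv: "{base q a, base q b} = {u, v}"
    and path: "is_path (blowup_V V q) (blowup_E V E q) p u v"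
    using P by auto
  have "u \<noteq> v" using True uv by auto
  obtain a' b' where ab': "{a, b} = {a', b'}" "base q a' = u" "base q b' = v"
    using uv by (metis doubleton_eq_iff insert_commute)
  then have "a' \<in> layered_copies q s X" "b' \<in> layered_copies q s X" using ab by auto
  note copies = layered_copiesD[OF this(1) X] layered_copiesD[OF this(2) X]
  have layer_fits: "q * Suc l \<le> t" if "l \<le> 3 * s" for l
    using t that by (metis Suc_le_mono add.commute le_trans mult_le_mono2 plus_1_eq_Suc)
  have "is_path (blowup_V V t) (blowup_E V E t) (a' # map (to_layer q (s + c)) p @ [b']) a' b'"
    using is_path_via_layer[OF path \<open>u \<noteq> v\<close>, of "layer q a'" t "s + c" "layer q b'"]
      copies c layer_fits ab'(2,3) by simp
  moreover have "set (a' # map (to_layer q (s + c)) p @ [b']) \<subseteq> {a, b} \<union> to_layer q (s + c) ` set p"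
    using ab'(1) by auto
  ultimately show ?thesis
    using True ab'(1) by (intro exI[of _ "a' # map (to_layer q (s + c)) p @ [b']"] exI[of _ a'] exI[of _ b']) simp
qed

lemma uncongested_linkage_via_layers:
  assumes X: "X \<subseteq> blowup_V V q" and M: "matching_on (layered_copies q s X) M"
    and t: "q * (3 * s + 1) \<le> t"
    and col: "\<And>e. e \<in> M \<Longrightarrow> col e < 2 * s + 1"
    and P: "\<And>e. e \<in> M \<Longrightarrow> card (base q ` e) = 2 \<Longrightarrow>
              \<exists>u v. base q ` e = {u, v} \<and> is_path (blowup_V V q) (blowup_E V E q) (P e) u v"
    and P_disjoint: "\<And>e f. e \<in> M \<Longrightarrow> f \<in> M \<Longrightarrow> e \<noteq> f \<Longrightarrow> col e = col f \<Longrightarrow>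
              card (base q ` e) = 2 \<Longrightarrow> card (base q ` f) = 2 \<Longrightarrow> set (P e) \<inter> set (P f) = {}"
  shows "has_uncongested_linkage (blowup_V V t) (blowup_E V E t) M"
proof -
  let ?Y = "layered_copies q s X"
  define lifted where "lifted e = to_layer q (s + col e) ` set (P e)" for e
  define S where "S e = e \<union> (if card (base q ` e) = 2 then lifted e else {})" for e
  have pairs: "\<And>e. e \<in> M \<Longrightarrow> \<exists>a b. e = {a, b} \<and> a \<noteq> b \<and> a \<in> ?Y \<and> b \<in> ?Y"
    and disj: "\<And>e f. e \<in> M \<Longrightarrow> f \<in> M \<Longrightarrow> e \<noteq> f \<Longrightarrow> e \<inter> f = {}"
    using M unfolding matching_on_def by simp_all
  have layer_low: "layer q w < s" if "e \<in> M" "w \<in> e" for e w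
    using pairs[OF that(1)] that(2) layered_copiesD(2)[OF _ X] by blast
  have layer_lifted: "layer q w = s + col e"
    if e: "e \<in> M" "card (base q ` e) = 2" and w: "w \<in> lifted e" for e w
  proof -
    obtain u v where "is_path (blowup_V V q) (blowup_E V E q) (P e) u v" using P[OF e] by blast
    then have "set (P e) \<subseteq> blowup_V V q" by (simp add: is_path_def)
    then show ?thesis using w layer_to_layer unfolding lifted_def by blast
  qed
  show ?thesis
  proof (rule has_uncongested_linkageI)
    fix e assume "e \<in> M"
    then obtain a b where ab: "e = {a, b}" "a \<noteq> b" "a \<in> ?Y" "b \<in> ?Y" using pairs by blast
    show "\<exists>p a b. e = {a, b} \<and> is_path (blowup_V V t) (blowup_E V E t) p a b \<and> set p \<subseteq> S e"
      using route_pair_via_layer[OF X ab(2-4) t col[OF \<open>e \<in> M\<close>] P[OF \<open>e \<in> M\<close>, unfolded ab(1)]]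
      unfolding S_def lifted_def ab(1) .
  next
    fix e f assume ef: "e \<in> M" "f \<in> M" "e \<noteq> f"
    show "S e \<inter> S f = {}"
    proof (rule equals0I)
      fix w assume w: "w \<in> S e \<inter> S f"
      consider "w \<in> e" "w \<in> f" | "w \<in> e" "w \<notin> f" | "w \<notin> e" "w \<in> f" | "w \<notin> e" "w \<notin> f" by blast
      then show False
      proof cases
        case 1
        then show False using disj[OF ef] by blast
      next
        case 2
        then have "card (base q ` f) = 2" "w \<in> lifted f" using w unfolding S_def by (auto split: if_splits)
        then show False using layer_low[OF ef(1) \<open>w \<in> e\<close>] layer_lifted[OF ef(2)] by simp
      next
        case 3
        then have "card (base q ` e) = 2" "w \<in> lifted e" using w unfolding S_def by (auto split: if_splits)
        then show False using layer_low[OF ef(2) \<open>w \<in> f\<close>] layer_lifted[OF ef(1)] by simp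
      next
        case 4
        then have crossing: "card (base q ` e) = 2" "card (base q ` f) = 2" and "w \<in> lifted e" "w \<in> lifted f"
          using w unfolding S_def by (auto split: if_splits)
        then have "col e = col f"
          using layer_lifted[OF ef(1) crossing(1) \<open>w \<in> lifted e\<close>]
            layer_lifted[OF ef(2) crossing(2) \<open>w \<in> lifted f\<close>] by simp
        then have "w \<in> to_layer q (s + col e) ` (set (P e) \<inter> set (P f))"
          using \<open>w \<in> lifted e\<close> \<open>w \<in> lifted f\<close> unfolding lifted_def
          by (simp add: image_Int[OF inj_to_layer])
        then show False using P_disjoint[OF ef \<open>col e = col f\<close> crossing] by simp
      qed
    qed
  qed
qed

lemma matching_on_projected_colour_class:
  assumes X: "X \<subseteq> blowup_V V q" and M: "matching_on (layered_copies q s X) M"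
    and separated: "\<And>e f. e \<in> M \<Longrightarrow> f \<in> M \<Longrightarrow> e \<noteq> f \<Longrightarrow> col e = col f \<Longrightarrow>
                       base q ` e \<inter> base q ` f = {}"
  shows "matching_on X {base q ` e | e. e \<in> M \<and> col e = c \<and> card (base q ` e) = 2}"
  unfolding matching_on_def
proof (intro conjI ballI impI)
  fix p assume "p \<in> {base q ` e | e. e \<in> M \<and> col e = c \<and> card (base q ` e) = 2}"
  then obtain e where e: "e \<in> M" "p = base q ` e" "card (base q ` e) = 2" by blast
  obtain a b where "e = {a, b}" "a \<in> layered_copies q s X" "b \<in> layered_copies q s X"
    using M e(1) unfolding matching_on_def by force
  with e show "\<exists>a b. p = {a, b} \<and> a \<noteq> b \<and> a \<in> X \<and> b \<in> X"
    using layered_copiesD(1)[OF _ X] by (intro exI[of _ "base q a"] exI[of _ "base q b"]) auto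
next
  fix p p' assume "p \<in> {base q ` e | e. e \<in> M \<and> col e = c \<and> card (base q ` e) = 2}"
    "p' \<in> {base q ` e | e. e \<in> M \<and> col e = c \<and> card (base q ` e) = 2}" "p \<noteq> p'"
  then obtain e f where "e \<in> M" "col e = c" "p = base q ` e" "f \<in> M" "col f = c" "p' = base q ` f"
    by (smt (verit) mem_Collect_eq)
  then show "p \<inter> p' = {}" using separated \<open>p \<noteq> p'\<close> by metis
qed

lemma matching_linked_layered_copies:
  assumes "finite V" and linked: "matching_linked (blowup_V V q) (blowup_E V E q) X"
    and t: "q * (3 * s + 1) \<le> t"
  shows "matching_linked (blowup_V V t) (blowup_E V E t) (layered_copies q s X)"
proof -
  let ?Vq = "blowup_V V q" and ?Eq = "blowup_E V E q"
  have X: "X \<subseteq> ?Vq" using linked by (simp add: matching_linked_def)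
  then have "finite X" using assms(1) by (auto simp: blowup_V_def intro: finite_subset)
  have "has_uncongested_linkage (blowup_V V t) (blowup_E V E t) M"
    if M: "matching_on (layered_copies q s X) M" for M
  proof -
    obtain col where col: "\<And>e. e \<in> M \<Longrightarrow> col e < 2 * s + 1"
      and separated: "\<And>e f. e \<in> M \<Longrightarrow> f \<in> M \<Longrightarrow> e \<noteq> f \<Longrightarrow> col e = col f \<Longrightarrow>
                         base q ` e \<inter> base q ` f = {}"
      using layered_matching_colouring[OF X \<open>finite X\<close> M] by blast
    define colour_class where
      "colour_class c = {base q ` e | e. e \<in> M \<and> col e = c \<and> card (base q ` e) = 2}" for c
    have "matching_on X (colour_class c)" for c
      unfolding colour_class_def using X M separated by (rule matching_on_projected_colour_class)
    then have "has_uncongested_linkage ?Vq ?Eq (colour_class c)" for c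
      using linked unfolding matching_linked_def by blast
    then have "\<forall>c. \<exists>L. (\<forall>p\<in>colour_class c. \<exists>a b. p = {a, b} \<and> is_path ?Vq ?Eq (L p) a b)
                \<and> (\<forall>p\<in>colour_class c. \<forall>p'\<in>colour_class c. p \<noteq> p' \<longrightarrow> set (L p) \<inter> set (L p') = {})"
      unfolding has_uncongested_linkage_def by blast
    then obtain L where L: "\<forall>c. (\<forall>p\<in>colour_class c. \<exists>a b. p = {a, b} \<and> is_path ?Vq ?Eq (L c p) a b)
                \<and> (\<forall>p\<in>colour_class c. \<forall>p'\<in>colour_class c. p \<noteq> p' \<longrightarrow> set (L c p) \<inter> set (L c p') = {})"
      by (rule choice[THEN exE])
    then have L_path: "\<And>c p. p \<in> colour_class c \<Longrightarrow> \<exists>a b. p = {a, b} \<and> is_path ?Vq ?Eq (L c p) a b"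
      and L_disjoint: "\<And>c p p'. p \<in> colour_class c \<Longrightarrow> p' \<in> colour_class c \<Longrightarrow> p \<noteq> p' \<Longrightarrow>
                                 set (L c p) \<inter> set (L c p') = {}"
      by blast+
    show ?thesis
    proof (rule uncongested_linkage_via_layers[OF X M t col, where P = "\<lambda>e. L (col e) (base q ` e)"])
      fix e assume "e \<in> M" "card (base q ` e) = 2"
      then have "base q ` e \<in> colour_class (col e)" unfolding colour_class_def by blast
      then show "\<exists>u v. base q ` e = {u, v} \<and> is_path ?Vq ?Eq (L (col e) (base q ` e)) u v"
        by (rule L_path)
    next
      fix e f assume ef: "e \<in> M" "f \<in> M" "e \<noteq> f" "col e = col f"
        and crossing: "card (base q ` e) = 2" "card (base q ` f) = 2"
      then have "base q ` e \<in> colour_class (col e)" "base q ` f \<in> colour_class (col e)"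
        unfolding colour_class_def by auto
      moreover have "base q ` e \<noteq> base q ` f" using separated[OF ef] crossing by force
      ultimately show "set (L (col e) (base q ` e)) \<inter> set (L (col f) (base q ` f)) = {}"
        using L_disjoint ef(4) by metis
    qed
  qed
  moreover have "layered_copies q s X \<subseteq> blowup_V V t"
    using layered_copies_subset[OF X] t by (simp add: algebra_simps)
  ultimately show ?thesis unfolding matching_linked_def by blast
qed

section \<open>Linkage capacity\<close>

definition achievable_rate :: "'a set \<Rightarrow> 'a set set \<Rightarrow> real \<Rightarrow> bool" where
  "achievable_rate V E c \<longleftrightarrow> (\<exists>T::nat. \<forall>t\<ge>T. \<exists>X. matching_linked (blowup_V V t) (blowup_E V E t) X
                                              \<and> card X = nat \<lfloor>c * real t\<rfloor>)"

lemma linkage_capacity_achievable_rates: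
  "linkage_capacity V E = Sup (insert 0 {c. c > 0 \<and> achievable_rate V E c})"
  by (simp add: linkage_capacity_def achievable_rate_def)

lemma achievable_rate_le:
  assumes "finite V" "achievable_rate V E c"
  shows "c \<le> card V + 1"
proof -
  obtain T where T: "\<forall>t\<ge>T. \<exists>X. matching_linked (blowup_V V t) (blowup_E V E t) X \<and> card X = nat \<lfloor>c * real t\<rfloor>"
    using assms(2) by (auto simp: achievable_rate_def)
  define t where "t = max T 1"
  have "T \<le> t" "1 \<le> t" by (simp_all add: t_def)
  then obtain X where X: "matching_linked (blowup_V V t) (blowup_E V E t) X" "card X = nat \<lfloor>c * real t\<rfloor>"
    using T by blast
  have "card X \<le> card (blowup_V V t)"
    using X(1) assms(1) by (intro card_mono) (auto simp: matching_linked_def blowup_V_def)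
  then have "nat \<lfloor>c * t\<rfloor> \<le> card V * t"
    using X(2) by (simp add: blowup_V_def card_cartesian_product)
  then have "\<lfloor>c * t\<rfloor> \<le> int (card V * t)" by linarith
  then have "c * t < card V * t + 1" by linarith
  also have "\<dots> \<le> (real (card V) + 1) * t" using \<open>1 \<le> t\<close> by (simp add: algebra_simps)
  finally have "c < real (card V) + 1" by (rule mult_right_less_imp_less) simp
  then show ?thesis by simp
qed

lemma bdd_above_achievable_rates:
  assumes "finite V"
  shows "bdd_above (insert 0 {c. c > 0 \<and> achievable_rate V E c})"
proof (rule bdd_aboveI)
  fix c assume "c \<in> insert 0 {c. c > 0 \<and> achievable_rate V E c}"
  then show "c \<le> card V + 1" using achievable_rate_le[OF assms, of E c] by auto
qed

lemma linkage_capacity_nonneg: "finite V \<Longrightarrow> 0 \<le> linkage_capacity V E"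
  unfolding linkage_capacity_achievable_rates
  by (rule cSup_upper[OF insertI1 bdd_above_achievable_rates])

lemma achievable_rateI:
  assumes "\<exists>T. \<forall>t\<ge>T. \<exists>Y. matching_linked (blowup_V V t) (blowup_E V E t) Y \<and> c * real t \<le> card Y"
  shows "achievable_rate V E c"
proof -
  obtain T where T: "\<forall>t\<ge>T. \<exists>Y. matching_linked (blowup_V V t) (blowup_E V E t) Y \<and> c * real t \<le> card Y"
    using assms by blast
  have "\<exists>X. matching_linked (blowup_V V t) (blowup_E V E t) X \<and> card X = nat \<lfloor>c * real t\<rfloor>"
    if "T \<le> t" for t
  proof -
    obtain Y where Y: "matching_linked (blowup_V V t) (blowup_E V E t) Y" "c * real t \<le> card Y"
      using T \<open>T \<le> t\<close> by blast
    then have "nat \<lfloor>c * real t\<rfloor> \<le> card Y" by linarith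
    then obtain X where "X \<subseteq> Y" "card X = nat \<lfloor>c * real t\<rfloor>" by (meson obtain_subset_with_card_n)
    then show ?thesis using matching_linked_subset[OF Y(1)] by blast
  qed
  then show ?thesis unfolding achievable_rate_def by blast
qed

lemma linkage_capacity_ge:
  fixes A :: real
  assumes "finite V"
    and "\<And>c. 0 < c \<Longrightarrow> c < A \<Longrightarrow>
           \<exists>T. \<forall>t\<ge>T. \<exists>Y. matching_linked (blowup_V V t) (blowup_E V E t) Y \<and> c * real t \<le> card Y"
  shows "A \<le> linkage_capacity V E"
proof (cases "A > 0")
  case True
  then show ?thesis
    unfolding linkage_capacity_achievable_rates
  proof (rule dense_le_bounded)
    fix c assume "0 < c" "c < A"
    then have "achievable_rate V E c" by (intro achievable_rateI assms(2))
    then show "c \<le> Sup (insert 0 {c. c > 0 \<and> achievable_rate V E c})"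
      using \<open>0 < c\<close> by (intro cSup_upper bdd_above_achievable_rates assms(1)) simp
  qed
qed (use linkage_capacity_nonneg[OF assms(1), of E] in linarith)

lemma enough_layers_eventually:
  fixes c :: real and k q :: nat
  assumes "0 < c" "c < k / (3 * q)"
  shows "\<exists>T. \<forall>t\<ge>T. q * (3 * ((t div q - 1) div 3) + 1) \<le> t \<and> c * t \<le> k * ((t div q - 1) div 3)"
proof -
  define A where "A = k / (3 * q)"
  have "q > 0" "k > 0" using assms by (cases "q = 0"; cases "k = 0"; auto)+
  have "A - c > 0" using assms(2) by (simp add: A_def)
  define T where "T = max q (nat \<lceil>4 * k / (3 * (A - c))\<rceil>)"
  have "q * (3 * s + 1) \<le> t \<and> c * t \<le> k * s" if "T \<le> t" "s = (t div q - 1) div 3" for t s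
  proof
    have "q \<le> t" and t_large: "4 * k / (3 * (A - c)) \<le> t" using that(1) by (auto simp: T_def)
    then have "1 \<le> t div q" using \<open>q > 0\<close> div_greater_zero_iff[of t q] by linarith
    then have "3 * s + 1 \<le> t div q" "t div q \<le> 3 * s + 3" using that(2) by linarith+
    then have "q * (3 * s + 1) \<le> q * (t div q)" by (intro mult_le_mono2)
    also have "\<dots> \<le> t" by simp
    finally show "q * (3 * s + 1) \<le> t" .
    have "t < q * (t div q + 1)"
      using dividend_less_div_times[OF \<open>q > 0\<close>, of t] by (simp add: algebra_simps)
    also have "\<dots> \<le> q * (3 * s + 4)" using \<open>t div q \<le> 3 * s + 3\<close> by (intro mult_le_mono2) simp
    finally have "real t < real (q * (3 * s + 4))" by (simp only: of_nat_less_iff)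
    then have "real t < real q * (3 * real s + 4)" by simp
    then have "real k * t < k * (real q * (3 * real s + 4))"
      using \<open>k > 0\<close> by (intro mult_strict_left_mono) simp_all
    then have "A * t < k * s + 4 * k / 3"
      using \<open>q > 0\<close> by (simp add: A_def field_simps)
    moreover have "4 * k / 3 \<le> (A - c) * t"
      using t_large \<open>A - c > 0\<close> by (simp add: field_simps)
    ultimately show "c * t \<le> k * s" by (simp add: algebra_simps)
  qed
  then show ?thesis by blast
qed

theorem mainTheorem6:
  fixes V :: "'a set" and E :: "'a set set" and q :: nat and X :: "('a \<times> nat) set"
  assumes "graph V E"
    and "matching_linked (blowup_V V q) (blowup_E V E q) X"
  shows "linkage_capacity V E \<ge> (1/3) * (real (card X) / real q)"
proof -
  have "finite V" using assms(1) by (simp add: graph_def)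
  have X: "X \<subseteq> blowup_V V q" using assms(2) by (simp add: matching_linked_def)
  txt \<open>For q = 0 or X = {} the bound is 0 and there is no rate c to consider.\<close>
  have "card X / (3 * q) \<le> linkage_capacity V E"
  proof (rule linkage_capacity_ge[OF \<open>finite V\<close>])
    fix c :: real assume "0 < c" "c < card X / (3 * q)"
    then obtain T where T: "\<And>t. T \<le> t \<Longrightarrow> q * (3 * ((t div q - 1) div 3) + 1) \<le> t
                                      \<and> c * t \<le> card X * ((t div q - 1) div 3)"
      using enough_layers_eventually by blast
    have "matching_linked (blowup_V V t) (blowup_E V E t) (layered_copies q ((t div q - 1) div 3) X)
          \<and> c * t \<le> card (layered_copies q ((t div q - 1) div 3) X)" if "T \<le> t" for t
      using T[OF that] matching_linked_layered_copies[OF \<open>finite V\<close> assms(2)] card_layered_copies[OF X]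
      by simp
    then show "\<exists>T. \<forall>t\<ge>T. \<exists>Y. matching_linked (blowup_V V t) (blowup_E V E t) Y \<and> c * t \<le> card Y"
      by blast
  qed
  then show ?thesis by simp
qed

end
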